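(* Let $\tilde F:\mathbb{R}\to\mathbb{R}$ be continuous in a neighborhood of $x_0\in\mathbb{R}$ and point-Lipschitz at $x_0$. Then the differential equation $\dot x=\tilde F(x)$ with initial condition $x(0)=x_0$ has a unique solution.
   Context: $\tilde F$ is point-Lipschitz at $x_0$ if there exist a neighborhood $\mathcal{U}$ of $x_0$ and $L\ge 0$ such that $|\tilde F(x)-\tilde F(x_0)|\le L|x-x_0|$ for all $x\in\mathcal{U}$. *)

theory Defs
  imports "HOL-Analysis.Analysis"
begin

definition point_Lipschitz :: "(real \<Rightarrow> real) \<Rightarrow> real \<Rightarrow> bool" where
  "point_Lipschitz F x0 \<longleftrightarrow>
     (\<exists>U L. open U \<and> x0 \<in> U \<and> L \<ge> 0 \<and> (\<forall>x\<in>U. \<bar>F x - F x0\<bar> \<le> L * \<bar>x - x0\<bar>))"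

definition is_solution_on :: "(real \<Rightarrow> real) \<Rightarrow> real \<Rightarrow> real set \<Rightarrow> (real \<Rightarrow> real) \<Rightarrow> bool" where
  "is_solution_on F x0 I x \<longleftrightarrow>
     0 \<in> I \<and> x 0 = x0 \<and> (\<forall>t\<in>I. (x has_real_derivative F (x t)) (at t))"

end

theory Submission
  imports Defs "HOL-Complex_Analysis.Conformal_Mappings"
begin

text \<open>If \<open>F x0 = 0\<close>, the constant \<open>x0\<close> is a solution, and the point-Lipschitz bound
  \<open>\<bar>F y\<bar> \<le> L \<bar>y - x0\<bar>\<close> keeps every solution through \<open>x0\<close> there: on a time interval of
  radius \<open>\<epsilon>\<close> with \<open>\<epsilon> L < 1\<close> the largest deviation \<open>M\<close> from \<open>x0\<close> satisfies
  \<open>M \<le> \<epsilon> L M\<close>. If \<open>F x0 \<noteq> 0\<close>, then \<open>F\<close> has no zero near \<open>x0\<close> and we separate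
  variables: for an antiderivative \<open>G\<close> of \<open>1 / F\<close> every solution satisfies \<open>G (y t) = t\<close>,
  so the solutions are exactly the local inverse of \<open>G\<close>. In both cases solutions are
  locally unique along the reference solution, and connectedness of the time interval
  turns local into global uniqueness.\<close>

lemma eventually_const_if_DERIV_zero:
  fixes f :: "real \<Rightarrow> real"
  assumes "eventually (\<lambda>s. (f has_real_derivative 0) (at s)) (nhds t)"
  shows "eventually (\<lambda>s. f s = f t) (nhds t)"
proof -
  obtain e where "e > 0" and der: "\<And>s. s \<in> ball t e \<Longrightarrow> (f has_real_derivative 0) (at s)"
    using assms unfolding eventually_nhds_metric by (auto simp: dist_commute)
  have "(f has_real_derivative 0) (at s within ball t e)" if "s \<in> ball t e" for s
    using der[OF that] by (rule has_field_derivative_at_within)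
  then obtain c where "\<forall>s\<in>ball t e. f s = c"
    using has_field_derivative_zero_constant[OF convex_ball] by blast
  then have "\<forall>s\<in>ball t e. f s = f t" using \<open>e > 0\<close> by simp
  moreover have "eventually (\<lambda>s. s \<in> ball t e) (nhds t)"
    using \<open>e > 0\<close> by (intro eventually_nhds_in_open) auto
  ultimately show ?thesis by (simp add: eventually_mono)
qed

lemma isCont_eventually_in_open:
  assumes "isCont f t" "open U" "f t \<in> U"
  shows "eventually (\<lambda>s. f s \<in> U) (nhds t)"
  using assms by (simp add: continuous_at_open eventually_nhds)

lemma eq_on_connected_if_locally_eq:
  fixes x y :: "'a::topological_space \<Rightarrow> 'b::metric_space"
  assumes "connected I" "open I" "t0 \<in> I" "x t0 = y t0"
    and "continuous_on I x" "continuous_on I y"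
    and local_eq: "\<And>t. t \<in> I \<Longrightarrow> x t = y t \<Longrightarrow> eventually (\<lambda>s. x s = y s) (nhds t)"
    and "t \<in> I"
  shows "x t = y t"
proof -
  define A where "A = {s \<in> I. x s = y s}"
  have "closedin (top_of_set I) A"
    using closedin_continuous_maps_eq[of euclidean "top_of_set I" x y] assms(5,6)
    by (simp add: A_def)
  moreover have "openin (top_of_set I) A"
  proof -
    have "open A" unfolding open_subopen[of A]
    proof
      fix s assume "s \<in> A"
      then obtain T where "open T" "s \<in> T" "\<forall>r\<in>T. x r = y r"
        using local_eq unfolding A_def eventually_nhds by blast
      then show "\<exists>T. open T \<and> s \<in> T \<and> T \<subseteq> A"
        using \<open>open I\<close> \<open>s \<in> A\<close> by (intro exI[of _ "T \<inter> I"]) (auto simp: A_def)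
    qed
    then show ?thesis by (rule open_subset[rotated]) (simp add: A_def)
  qed
  moreover have "t0 \<in> A" using assms(3,4) by (simp add: A_def)
  ultimately have "A = I"
    using \<open>connected I\<close> connected_clopen by blast
  then show ?thesis using \<open>t \<in> I\<close> unfolding A_def by blast
qed

lemma inj_on_if_DERIV_nonzero:
  fixes f f' :: "real \<Rightarrow> real"
  assumes "is_interval S"
    and der: "\<And>x. x \<in> S \<Longrightarrow> (f has_real_derivative f' x) (at x)"
    and nonzero: "\<And>x. x \<in> S \<Longrightarrow> f' x \<noteq> 0"
  shows "inj_on f S"
proof -
  have neq: "f a \<noteq> f b" if "a \<in> S" "b \<in> S" "a < b" for a b
  proof
    assume "f a = f b"
    have ab: "{a..b} \<subseteq> S"
      using mem_is_interval_1_I[OF \<open>is_interval S\<close> \<open>a \<in> S\<close> \<open>b \<in> S\<close>] by auto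
    have "continuous_on {a..b} f"
      by (intro continuous_at_imp_continuous_on ballI) (metis DERIV_isCont der ab subsetD)
    moreover have "f differentiable at x" if "a < x" "x < b" for x
    proof -
      have "x \<in> S" using ab that by auto
      then show ?thesis using der unfolding real_differentiable_def by blast
    qed
    ultimately obtain z where z: "a < z" "z < b" "(f has_real_derivative 0) (at z)"
      using Rolle[OF \<open>a < b\<close> \<open>f a = f b\<close>] by blast
    then have "z \<in> S" using ab by auto
    have "f' z = 0" using DERIV_unique[OF der[OF \<open>z \<in> S\<close>] z(3)] .
    with nonzero \<open>z \<in> S\<close> show False by blast
  qed
  show ?thesis
  proof (rule inj_onI)
    fix a b assume "a \<in> S" "b \<in> S" "f a = f b"
    then show "a = b"
      using neq[of a b] neq[of b a] by (cases a b rule: linorder_cases) auto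
  qed
qed

lemma DERIV_local_inverse:
  fixes G h :: "real \<Rightarrow> real"
  assumes S: "is_interval S" "open S" "c \<in> S"
    and der: "\<And>u. u \<in> S \<Longrightarrow> (G has_real_derivative h u) (at u)"
    and nonzero: "\<And>u. u \<in> S \<Longrightarrow> h u \<noteq> 0"
  obtains \<delta> where "\<delta> > 0"
    and "\<And>t. t \<in> ball (G c) \<delta> \<Longrightarrow> inv_into S G t \<in> S \<and> G (inv_into S G t) = t \<and>
           (inv_into S G has_real_derivative inverse (h (inv_into S G t))) (at t)"
proof -
  have inj: "inj_on G S" by (rule inj_on_if_DERIV_nonzero[OF S(1) der nonzero])
  have cont: "continuous_on S G"
    by (rule continuous_at_imp_continuous_on) (use der DERIV_isCont in blast)
  have "open (G ` S)" by (rule invariance_of_domain[OF cont S(2) inj])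
  then obtain \<delta> where "\<delta> > 0" "ball (G c) \<delta> \<subseteq> G ` S"
    using S(3) open_contains_ball by blast
  moreover have "inv_into S G (G u) \<in> S \<and> G (inv_into S G (G u)) = G u \<and>
      (inv_into S G has_real_derivative inverse (h (inv_into S G (G u)))) (at (G u))"
    if "u \<in> S" for u
    using has_field_derivative_inverse_strong[OF der[OF that] nonzero[OF that] S(2) that cont]
      inj that by simp
  ultimately show ?thesis using that by (metis image_iff subsetD)
qed

lemma eq_on_cball_if_DERIV_bounded_by_deviation:
  fixes y y' :: "real \<Rightarrow> real"
  assumes der: "\<And>s. s \<in> cball t \<epsilon> \<Longrightarrow> (y has_real_derivative y' s) (at s)"
    and bound: "\<And>s. s \<in> cball t \<epsilon> \<Longrightarrow> \<bar>y' s\<bar> \<le> L * \<bar>y s - p\<bar>"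
    and "L \<ge> 0" "\<epsilon> * L < 1" "y t = p" "s \<in> cball t \<epsilon>"
  shows "y s = p"
proof -
  have "\<epsilon> \<ge> 0" using \<open>s \<in> cball t \<epsilon>\<close> by (metis mem_cball order_trans zero_le_dist)
  have "continuous_on (cball t \<epsilon>) y"
    by (rule continuous_at_imp_continuous_on) (use der DERIV_isCont in blast)
  then have "continuous_on (cball t \<epsilon>) (\<lambda>s. \<bar>y s - p\<bar>)"
    by (intro continuous_intros)
  then obtain s0 where "s0 \<in> cball t \<epsilon>"
    and max: "\<And>s. s \<in> cball t \<epsilon> \<Longrightarrow> \<bar>y s - p\<bar> \<le> \<bar>y s0 - p\<bar>"
    using continuous_attains_sup[OF compact_cball] \<open>\<epsilon> \<ge> 0\<close>
    by (metis centre_in_cball empty_iff)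
  define M where "M = \<bar>y s0 - p\<bar>"
  have "M \<ge> 0" by (simp add: M_def)
  have der_within: "(y has_real_derivative y' s) (at s within cball t \<epsilon>)"
    if "s \<in> cball t \<epsilon>" for s
    using der[OF that] by (rule has_field_derivative_at_within)
  have bound_M: "norm (y' s) \<le> L * M" if "s \<in> cball t \<epsilon>" for s
    using bound[OF that] mult_left_mono[OF max[OF that] \<open>L \<ge> 0\<close>] by (simp add: M_def)
  have "t \<in> cball t \<epsilon>" using \<open>\<epsilon> \<ge> 0\<close> by simp
  have "M = \<bar>y s0 - y t\<bar>" using \<open>y t = p\<close> by (simp add: M_def)
  also have "\<dots> \<le> L * M * \<bar>s0 - t\<bar>"
    using field_differentiable_bound[OF convex_cball der_within bound_M
        \<open>s0 \<in> cball t \<epsilon>\<close> \<open>t \<in> cball t \<epsilon>\<close>]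
    by simp
  also have "\<dots> \<le> L * M * \<epsilon>"
    using \<open>s0 \<in> cball t \<epsilon>\<close> \<open>L \<ge> 0\<close> \<open>M \<ge> 0\<close>
    by (simp add: dist_real_def mult_left_mono)
  finally have "(1 - \<epsilon> * L) * M \<le> 0" by (simp add: algebra_simps)
  then have "M = 0"
    using \<open>\<epsilon> * L < 1\<close> \<open>M \<ge> 0\<close> by (simp add: mult_le_0_iff)
  then show ?thesis using max[OF \<open>s \<in> cball t \<epsilon>\<close>] by (simp add: M_def)
qed

lemma antiderivative_of_reciprocal:
  fixes F :: "real \<Rightarrow> real"
  assumes U: "open U" "x0 \<in> U" and contF: "continuous_on U F" and "F x0 \<noteq> 0"
  obtains r G where "r > 0" "G x0 = 0"
    and "\<And>u. u \<in> ball x0 r \<Longrightarrow> F u \<noteq> 0 \<and> (G has_real_derivative inverse (F u)) (at u)"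
proof -
  have "open (U \<inter> F -` (- {0}))"
    using continuous_open_preimage[OF contF U(1)] by blast
  then obtain r where "r > 0" and r: "cball x0 r \<subseteq> U \<inter> F -` (- {0})"
    using U(2) \<open>F x0 \<noteq> 0\<close> open_contains_cball by blast
  define h where "h u = inverse (F u)" for u
  have "continuous_on {x0 - r..x0 + r} h"
    unfolding h_def cball_eq_atLeastAtMost[symmetric]
    using continuous_on_subset[OF contF] r by (intro continuous_intros) auto
  define G where "G u = integral {x0 - r..u} h - integral {x0 - r..x0} h" for u
  have "F u \<noteq> 0 \<and> (G has_real_derivative inverse (F u)) (at u)" if "u \<in> ball x0 r" for u
  proof
    have "u \<in> cball x0 r" using that by simp
    then show "F u \<noteq> 0" using r by blast
    have u: "x0 - r < u" "u < x0 + r" using that by (auto simp: dist_real_def)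
    have "((\<lambda>u. integral {x0 - r..u} h) has_real_derivative h u) (at u within {x0 - r..x0 + r})"
      using integral_has_real_derivative[OF \<open>continuous_on _ h\<close>] u by simp
    then have "((\<lambda>u. integral {x0 - r..u} h) has_real_derivative h u) (at u)"
      using at_within_Icc_at[OF u] by simp
    then show "(G has_real_derivative inverse (F u)) (at u)"
      unfolding G_def h_def using DERIV_diff[OF _ DERIV_const] by fastforce
  qed
  moreover have "G x0 = 0" by (simp add: G_def)
  ultimately show ?thesis using that \<open>r > 0\<close> by blast
qed

lemma solution_continuous_on:
  assumes "is_solution_on F x0 I y"
  shows "continuous_on I y"
  by (rule continuous_at_imp_continuous_on) (use assms DERIV_isCont in \<open>auto simp: is_solution_on_def\<close>)

lemma separation_of_variables:
  fixes F G y :: "real \<Rightarrow> real"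
  assumes S: "open S" "y t \<in> S"
    and G: "\<And>u. u \<in> S \<Longrightarrow> F u \<noteq> 0 \<and> (G has_real_derivative inverse (F u)) (at u)"
    and y: "eventually (\<lambda>s. (y has_real_derivative F (y s)) (at s)) (nhds t)"
  shows "eventually (\<lambda>s. y s \<in> S \<and> G (y s) - s = G (y t) - t) (nhds t)"
proof -
  have "isCont y t" using eventually_nhds_x_imp_x[OF y] by (rule DERIV_isCont)
  then have "eventually (\<lambda>s. y s \<in> S) (nhds t)"
    using S by (rule isCont_eventually_in_open)
  moreover from this y
  have "eventually (\<lambda>s. ((\<lambda>s. G (y s) - s) has_real_derivative 0) (at s)) (nhds t)"
  proof eventually_elim
    case (elim s)
    have "((\<lambda>s. G (y s) - s) has_real_derivative inverse (F (y s)) * F (y s) - 1) (at s)"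
      by (rule DERIV_diff[OF DERIV_chain2[OF conjunct2[OF G[OF elim(1)]] elim(2)] DERIV_ident])
    then show ?case using G[OF elim(1)] by simp
  qed
  then have "eventually (\<lambda>s. G (y s) - s = G (y t) - t) (nhds t)"
    by (rule eventually_const_if_DERIV_zero)
  ultimately show ?thesis by (rule eventually_conj)
qed

lemma Lipschitz_equilibrium_locally_unique:
  fixes F y :: "real \<Rightarrow> real"
  assumes "point_Lipschitz F p" "F p = 0"
    and y: "eventually (\<lambda>s. (y has_real_derivative F (y s)) (at s)) (nhds t)" and "y t = p"
  shows "eventually (\<lambda>s. y s = p) (nhds t)"
proof -
  obtain U L where U: "open U" "p \<in> U" and "L \<ge> 0"
    and Lip: "\<And>u. u \<in> U \<Longrightarrow> \<bar>F u\<bar> \<le> L * \<bar>u - p\<bar>"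
    using assms(1,2) unfolding point_Lipschitz_def by auto
  have "isCont y t" using eventually_nhds_x_imp_x[OF y] by (rule DERIV_isCont)
  then have "eventually (\<lambda>s. y s \<in> U) (nhds t)"
    using U \<open>y t = p\<close> by (auto intro: isCont_eventually_in_open)
  with y have "eventually (\<lambda>s. (y has_real_derivative F (y s)) (at s) \<and> y s \<in> U) (nhds t)"
    by (rule eventually_conj)
  then obtain e where "e > 0"
    and near: "\<And>s. dist s t < e \<Longrightarrow> (y has_real_derivative F (y s)) (at s) \<and> y s \<in> U"
    unfolding eventually_nhds_metric by blast
  define \<epsilon> where "\<epsilon> = min (e / 2) (1 / (L + 1))"
  have "\<epsilon> > 0" "\<epsilon> < e" using \<open>e > 0\<close> \<open>L \<ge> 0\<close> by (auto simp: \<epsilon>_def)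
  have "\<epsilon> \<le> 1 / (L + 1)" by (simp add: \<epsilon>_def)
  then have "\<epsilon> * L < 1" using \<open>\<epsilon> > 0\<close> \<open>L \<ge> 0\<close> by (simp add: field_simps)
  have near_cball: "(y has_real_derivative F (y s)) (at s) \<and> y s \<in> U" if "s \<in> cball t \<epsilon>" for s
    using near[of s] that \<open>\<epsilon> < e\<close> by (simp add: dist_commute)
  have "y s = p" if "s \<in> ball t \<epsilon>" for s
    using eq_on_cball_if_DERIV_bounded_by_deviation[of t \<epsilon> y "\<lambda>s. F (y s)" L p s]
      near_cball Lip \<open>L \<ge> 0\<close> \<open>\<epsilon> * L < 1\<close> \<open>y t = p\<close> that
    by auto
  moreover have "eventually (\<lambda>s. s \<in> ball t \<epsilon>) (nhds t)"
    using \<open>\<epsilon> > 0\<close> by (intro eventually_nhds_in_open) auto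
  ultimately show ?thesis by (simp add: eventually_mono)
qed

definition ode_locally_unique_on :: "(real \<Rightarrow> real) \<Rightarrow> real set \<Rightarrow> (real \<Rightarrow> real) \<Rightarrow> bool" where
  "ode_locally_unique_on F J x \<longleftrightarrow>
     (\<forall>t\<in>J. \<forall>y. eventually (\<lambda>s. (y has_real_derivative F (y s)) (at s)) (nhds t) \<and> y t = x t
        \<longrightarrow> eventually (\<lambda>s. y s = x s) (nhds t))"

lemma solution_near_regular_point:
  fixes F :: "real \<Rightarrow> real"
  assumes "open U" "x0 \<in> U" "continuous_on U F" "F x0 \<noteq> 0"
  obtains \<delta> x where "\<delta> > 0" "is_solution_on F x0 {-\<delta><..<\<delta>} x"
    and "ode_locally_unique_on F {-\<delta><..<\<delta>} x"
proof -
  obtain r G where "r > 0" "G x0 = 0"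
    and G: "\<And>u. u \<in> ball x0 r \<Longrightarrow> F u \<noteq> 0 \<and> (G has_real_derivative inverse (F u)) (at u)"
    using antiderivative_of_reciprocal[OF assms] by blast
  define S where "S = ball x0 r"
  have S: "is_interval S" "open S" "x0 \<in> S"
    using \<open>r > 0\<close> by (auto simp: S_def is_interval_convex_1)
  have inj: "inj_on G S"
    by (rule inj_on_if_DERIV_nonzero[OF S(1), of G "\<lambda>u. inverse (F u)"]) (simp_all add: G S_def)
  obtain \<delta> where "\<delta> > 0" and inv: "\<And>t. t \<in> ball 0 \<delta> \<Longrightarrow> inv_into S G t \<in> S \<and>
      G (inv_into S G t) = t \<and> (inv_into S G has_real_derivative F (inv_into S G t)) (at t)"
    using DERIV_local_inverse[OF S, of G "\<lambda>u. inverse (F u)"] G \<open>G x0 = 0\<close> by (auto simp: S_def)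
  define x where "x = inv_into S G"
  have ball: "ball 0 \<delta> = {-\<delta><..<\<delta>}" by (simp add: ball_eq_greaterThanLessThan)
  have "x 0 = x0" using inv_into_f_f[OF inj S(3)] \<open>G x0 = 0\<close> by (simp add: x_def)
  then have "is_solution_on F x0 {-\<delta><..<\<delta>} x"
    using inv \<open>\<delta> > 0\<close> by (auto simp: is_solution_on_def x_def ball[symmetric])
  moreover have "eventually (\<lambda>s. y s = x s) (nhds t)"
    if t: "t \<in> {-\<delta><..<\<delta>}" and y: "eventually (\<lambda>s. (y has_real_derivative F (y s)) (at s)) (nhds t)"
      and "y t = x t" for t y
  proof -
    have "y t \<in> S" "G (y t) = t" using inv[of t] t \<open>y t = x t\<close> by (auto simp: x_def ball)
    then have "eventually (\<lambda>s. y s \<in> S \<and> G (y s) = s) (nhds t)"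
      using separation_of_variables[OF S(2) _ G[folded S_def] y] by simp
    moreover have "eventually (\<lambda>s. s \<in> ball 0 \<delta>) (nhds t)"
      using t by (intro eventually_nhds_in_open) (auto simp: ball)
    ultimately show ?thesis
    proof eventually_elim
      case (elim s)
      then have "G (y s) = G (x s)" "x s \<in> S" using inv[of s] by (auto simp: x_def)
      then show ?case using inj_onD[OF inj] elim by blast
    qed
  qed
  ultimately show ?thesis
    using \<open>\<delta> > 0\<close> that unfolding ode_locally_unique_on_def by blast
qed

lemma solution_unique_if_locally_unique:
  assumes x: "is_solution_on F x0 J x"
    and local_unique: "ode_locally_unique_on F J x"
    and I: "is_interval I" "open I" "I \<subseteq> J" and y: "is_solution_on F x0 I y"
    and "t \<in> I"
  shows "y t = x t"
proof (rule eq_on_connected_if_locally_eq[of I 0 y x])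
  show "connected I" using I(1) by (simp add: is_interval_connected)
  show "0 \<in> I" "y 0 = x 0" using x y by (simp_all add: is_solution_on_def)
  show "continuous_on I y" by (rule solution_continuous_on[OF y])
  show "continuous_on I x" using solution_continuous_on[OF x] I(3) by (rule continuous_on_subset)
  fix s assume "s \<in> I" "y s = x s"
  have "eventually (\<lambda>r. r \<in> I) (nhds s)"
    using I(2) \<open>s \<in> I\<close> by (rule eventually_nhds_in_open)
  then have "eventually (\<lambda>r. (y has_real_derivative F (y r)) (at r)) (nhds s)"
    by (rule eventually_mono) (use y in \<open>simp add: is_solution_on_def\<close>)
  then show "eventually (\<lambda>r. y r = x r) (nhds s)"
    using local_unique \<open>s \<in> I\<close> \<open>y s = x s\<close> I(3) unfolding ode_locally_unique_on_def by blast
qed (use I \<open>t \<in> I\<close> in auto)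

theorem corollary4p4:
  fixes F :: "real \<Rightarrow> real" and x0 :: real
  assumes "\<exists>U. open U \<and> x0 \<in> U \<and> continuous_on U F"
    and "point_Lipschitz F x0"
  shows "\<exists>\<delta>>0. \<exists>x. is_solution_on F x0 {-\<delta><..<\<delta>} x \<and>
           (\<forall>I y. is_interval I \<and> open I \<and> I \<subseteq> {-\<delta><..<\<delta>} \<and> is_solution_on F x0 I y
                  \<longrightarrow> (\<forall>t\<in>I. y t = x t))"
proof -
  obtain \<delta> x where "\<delta> > 0" and sol: "is_solution_on F x0 {-\<delta><..<\<delta>} x"
    and unique: "ode_locally_unique_on F {-\<delta><..<\<delta>} x"
  proof (cases "F x0 = 0")
    case True
    have "is_solution_on F x0 {-1<..<1} (\<lambda>_. x0)"
      using True by (simp add: is_solution_on_def)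
    moreover have "ode_locally_unique_on F {-1<..<1} (\<lambda>_. x0)"
      using Lipschitz_equilibrium_locally_unique[OF assms(2) True]
      by (simp add: ode_locally_unique_on_def)
    ultimately show ?thesis using that[of 1] by simp
  next
    case False
    obtain U where "open U" "x0 \<in> U" "continuous_on U F" using assms(1) by blast
    then show ?thesis using that solution_near_regular_point False by blast
  qed
  then show ?thesis
    using solution_unique_if_locally_unique[OF sol unique] by blast
qed

end
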